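(* Let $d\ge3$, $h\ge1$, and let $\ell$ be a leaf (a vertex at distance $h$ from the root). Then the exponent of $G(d,h)$ equals the order of $\bar{\mathbf{x}}_\ell$ in $G(d,h)$.
   Context: Let $\mathcal{T}(d,h)$ be the rooted tree in which the root $0$ has $d$ children, every vertex at distance $1,\dots,h-1$ from the root has $d-1$ children, and the vertices at distance $h$ are leaves. Let $V$ be its vertex set, $A$ its adjacency matrix, $\Delta := dI-A$, and $\Lambda\subset\mathbb{Z}^V$ the lattice spanned by the rows of $\Delta$. Then $G(d,h):=\mathbb{Z}^V/\Lambda$; $\{\mathbf{x}_i:i\in V\}$ is the standard basis of $\mathbb{Z}^V$ and $\bar{\mathbf{v}}$ denotes the image of $\mathbf{v}$ in $G(d,h)$. The exponent is the least common multiple of the orders of the elements. *)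

theory Defs
  imports Main
begin

text \<open>Vertices of T(d,h) are encoded as paths from the root: the root is [],
  the children of the root are [i] with i < d, and the children of a non-root
  vertex xs at distance < h are xs @ [j] with j < d - 1.  The distance of a
  vertex from the root is the length of its list.\<close>

definition tree_V :: "nat \<Rightarrow> nat \<Rightarrow> nat list set" where
  "tree_V d h = {xs. length xs \<le> h \<and> (xs \<noteq> [] \<longrightarrow> hd xs < d) \<and> (\<forall>i\<in>set (tl xs). i < d - 1)}"

definition tree_adj :: "nat list \<Rightarrow> nat list \<Rightarrow> bool" where
  "tree_adj x y \<longleftrightarrow> (\<exists>j. y = x @ [j]) \<or> (\<exists>j. x = y @ [j])"

definition ZV :: "nat \<Rightarrow> nat \<Rightarrow> (nat list \<Rightarrow> int) set" where
  "ZV d h = {v. \<forall>j. j \<notin> tree_V d h \<longrightarrow> v j = 0}"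

definition lap_row :: "nat \<Rightarrow> nat \<Rightarrow> nat list \<Rightarrow> nat list \<Rightarrow> int" where
  "lap_row d h i = (\<lambda>j. if j \<in> tree_V d h then
      int d * (if i = j then 1 else 0) - (if tree_adj i j then 1 else 0) else 0)"

definition lap_lattice :: "nat \<Rightarrow> nat \<Rightarrow> (nat list \<Rightarrow> int) set" where
  "lap_lattice d h = {v. \<exists>c :: nat list \<Rightarrow> int.
      v = (\<lambda>j. \<Sum>i\<in>tree_V d h. c i * lap_row d h i j)}"

definition std_basis :: "nat list \<Rightarrow> nat list \<Rightarrow> int" where
  "std_basis i = (\<lambda>j. if j = i then 1 else 0)"

text \<open>Order of the image of v in G(d,h) = Z^V / Lambda (0 if infinite).\<close>
definition elem_order :: "nat \<Rightarrow> nat \<Rightarrow> (nat list \<Rightarrow> int) \<Rightarrow> nat" where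
  "elem_order d h v = (if \<exists>n>0. (\<lambda>j. int n * v j) \<in> lap_lattice d h
     then (LEAST n. n > 0 \<and> (\<lambda>j. int n * v j) \<in> lap_lattice d h) else 0)"

definition group_exponent :: "nat \<Rightarrow> nat \<Rightarrow> nat" where
  "group_exponent d h = Lcm (elem_order d h ` ZV d h)"

end

theory Submission
  imports Defs "HOL-Combinatorics.Transposition"
begin

text \<open>A tree automorphism permutes the rows of \<open>\<Delta>\<close> and therefore preserves \<open>\<Lambda>\<close>; since the
  automorphisms act transitively on the leaves, an integer \<open>N\<close> with \<open>N x\<^sub>\<ell> \<in> \<Lambda>\<close> satisfies
  \<open>N x\<^sub>\<ell>' \<in> \<Lambda>\<close> for every leaf \<open>\<ell>'\<close>. If \<open>i\<close> is a child of \<open>x\<close>, the row of \<open>\<Delta>\<close> at \<open>i\<close> gives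
  \<open>x\<^sub>x = d x\<^sub>i - \<Delta>\<^sub>i - \<Sigma> x\<^sub>c\<close> over the children \<open>c\<close> of \<open>i\<close>, so by induction on the height
  \<open>N\<close> kills every \<open>x\<^sub>v\<close>, i.e. all of \<open>G(d,h)\<close>. Hence the exponent divides the order of
  \<open>x\<^sub>\<ell>\<close>, and the converse divisibility is trivial.\<close>

lemma tree_V_iff_nth:
  "xs \<in> tree_V d h \<longleftrightarrow>
     length xs \<le> h \<and> (\<forall>k<length xs. xs ! k < (if k = 0 then d else d - 1))"
  by (cases xs) (auto simp: tree_V_def all_set_conv_all_nth nth_Cons split: nat.splits)

lemma finite_tree_V: "finite (tree_V d h)"
proof (rule finite_subset)
  show "tree_V d h \<subseteq> {xs. set xs \<subseteq> {..<d} \<and> length xs \<le> h}"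
    by (auto simp: tree_V_iff_nth in_set_conv_nth split: if_splits) fastforce
  show "finite {xs. set xs \<subseteq> {..<d} \<and> length xs \<le> h}"
    by (rule finite_lists_length_le) simp
qed

lemma snoc_zero_in_tree_V:
  "x \<in> tree_V d h \<Longrightarrow> length x < h \<Longrightarrow> d \<ge> 2 \<Longrightarrow> x @ [0] \<in> tree_V d h"
  by (cases x) (auto simp: tree_V_def)

definition path_swap :: "nat list \<Rightarrow> nat list \<Rightarrow> nat list \<Rightarrow> nat list" where
  "path_swap l l' xs = map (\<lambda>k. transpose (l ! k) (l' ! k) (xs ! k)) [0..<length xs]"

lemma length_path_swap [simp]: "length (path_swap l l' xs) = length xs"
  by (simp add: path_swap_def)

lemma nth_path_swap [simp]:
  "k < length xs \<Longrightarrow> path_swap l l' xs ! k = transpose (l ! k) (l' ! k) (xs ! k)"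
  by (simp add: path_swap_def)

lemma path_swap_involutory [simp]: "path_swap l l' (path_swap l l' xs) = xs"
  by (rule nth_equalityI) simp_all

lemma path_swap_snoc:
  "path_swap l l' (xs @ [j]) = path_swap l l' xs @ [transpose (l ! length xs) (l' ! length xs) j]"
  by (rule nth_equalityI) (auto simp: nth_append less_Suc_eq)

lemma path_swap_self: "length l = length l' \<Longrightarrow> path_swap l l' l = l'"
  by (rule nth_equalityI) simp_all

lemma tree_adj_path_swap_iff: "tree_adj (path_swap l l' x) (path_swap l l' y) \<longleftrightarrow> tree_adj x y"
proof -
  have "tree_adj (path_swap l l' x) (path_swap l l' y)" if "tree_adj x y" for x y
    using that by (auto simp: tree_adj_def path_swap_snoc)
  then show ?thesis
    by (metis path_swap_involutory)
qed

lemma path_swap_in_tree_V_iff: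
  assumes "l \<in> tree_V d h" "l' \<in> tree_V d h" "length l = h" "length l' = h"
  shows "path_swap l l' x \<in> tree_V d h \<longleftrightarrow> x \<in> tree_V d h"
proof -
  have "path_swap l l' x \<in> tree_V d h" if x: "x \<in> tree_V d h" for x
  proof -
    have "transpose (l ! k) (l' ! k) (x ! k) < (if k = 0 then d else d - 1)"
      if "k < length x" for k
    proof -
      have "k < h"
        using x that by (simp add: tree_V_iff_nth)
      then show ?thesis
        using assms x that unfolding tree_V_iff_nth transpose_def by presburger
    qed
    then show ?thesis
      using x by (simp add: tree_V_iff_nth)
  qed
  then show ?thesis
    by (metis path_swap_involutory)
qed

lemma zero_in_lap_lattice: "(\<lambda>j. 0) \<in> lap_lattice d h"
  unfolding lap_lattice_def by (auto intro: exI[of _ "\<lambda>_. 0"])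

lemma lap_lattice_add:
  assumes "u \<in> lap_lattice d h" "w \<in> lap_lattice d h"
  shows "(\<lambda>j. u j + w j) \<in> lap_lattice d h"
proof -
  obtain a b where "u = (\<lambda>j. \<Sum>i\<in>tree_V d h. a i * lap_row d h i j)"
    and "w = (\<lambda>j. \<Sum>i\<in>tree_V d h. b i * lap_row d h i j)"
    using assms unfolding lap_lattice_def by blast
  then show ?thesis
    unfolding lap_lattice_def
    by (auto intro!: exI[of _ "\<lambda>i. a i + b i"] simp: sum.distrib distrib_right)
qed

lemma lap_lattice_scale:
  assumes "u \<in> lap_lattice d h"
  shows "(\<lambda>j. k * u j) \<in> lap_lattice d h"
proof -
  obtain a where "u = (\<lambda>j. \<Sum>i\<in>tree_V d h. a i * lap_row d h i j)"
    using assms unfolding lap_lattice_def by blast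
  then show ?thesis
    unfolding lap_lattice_def
    by (auto intro!: exI[of _ "\<lambda>i. k * a i"] simp: sum_distrib_left mult.assoc)
qed

lemma lap_lattice_diff:
  "u \<in> lap_lattice d h \<Longrightarrow> w \<in> lap_lattice d h \<Longrightarrow> (\<lambda>j. u j - w j) \<in> lap_lattice d h"
  using lap_lattice_add[of u d h "\<lambda>j. (-1) * w j"] lap_lattice_scale[of w d h "-1"] by simp

lemma lap_lattice_sum:
  "finite S \<Longrightarrow> (\<And>i. i \<in> S \<Longrightarrow> f i \<in> lap_lattice d h) \<Longrightarrow>
     (\<lambda>j. \<Sum>i\<in>S. f i j) \<in> lap_lattice d h"
  by (induction S rule: finite_induct) (simp_all add: zero_in_lap_lattice lap_lattice_add)

lemma lap_row_in_lap_lattice: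
  assumes "i \<in> tree_V d h"
  shows "lap_row d h i \<in> lap_lattice d h"
  unfolding lap_lattice_def
proof (intro CollectI exI[of _ "\<lambda>k. of_bool (k = i)"] ext)
  fix j
  show "lap_row d h i j = (\<Sum>k\<in>tree_V d h. of_bool (k = i) * lap_row d h k j)"
    using assms by (simp add: finite_tree_V)
qed

lemma lap_lattice_comp_automorphism:
  assumes "bij \<sigma>" and V: "\<And>x. \<sigma> x \<in> tree_V d h \<longleftrightarrow> x \<in> tree_V d h"
    and adj: "\<And>x y. tree_adj (\<sigma> x) (\<sigma> y) \<longleftrightarrow> tree_adj x y"
    and "v \<in> lap_lattice d h"
  shows "v \<circ> \<sigma> \<in> lap_lattice d h"
proof -
  obtain c where c: "v = (\<lambda>j. \<Sum>i\<in>tree_V d h. c i * lap_row d h i j)"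
    using assms(4) unfolding lap_lattice_def by blast
  have inj: "inj_on \<sigma> (tree_V d h)"
    using \<open>bij \<sigma>\<close> bij_is_inj inj_on_subset by blast
  have image: "\<sigma> ` tree_V d h = tree_V d h"
  proof (intro subset_antisym subsetI)
    fix x assume "x \<in> tree_V d h"
    then have "inv \<sigma> x \<in> tree_V d h"
      using V \<open>bij \<sigma>\<close> by (metis bij_inv_eq_iff)
    then show "x \<in> \<sigma> ` tree_V d h"
      using \<open>bij \<sigma>\<close> by (metis bij_inv_eq_iff image_eqI)
  qed (use V in auto)
  have row: "lap_row d h (\<sigma> i) (\<sigma> j) = lap_row d h i j" for i j
    using \<open>bij \<sigma>\<close> by (simp add: lap_row_def V adj bij_is_inj inj_eq)
  have "v (\<sigma> j) = (\<Sum>i\<in>tree_V d h. c (\<sigma> i) * lap_row d h i j)" for j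
  proof -
    have "v (\<sigma> j) = (\<Sum>i\<in>\<sigma> ` tree_V d h. c i * lap_row d h i (\<sigma> j))"
      by (simp add: c image)
    also have "\<dots> = (\<Sum>i\<in>tree_V d h. c (\<sigma> i) * lap_row d h i j)"
      by (simp add: sum.reindex[OF inj] row)
    finally show ?thesis .
  qed
  then show ?thesis
    unfolding lap_lattice_def by (auto simp: comp_def)
qed

abbreviation annihilates :: "nat \<Rightarrow> nat \<Rightarrow> nat \<Rightarrow> (nat list \<Rightarrow> int) \<Rightarrow> bool" where
  "annihilates d h N v \<equiv> (\<lambda>j. int N * v j) \<in> lap_lattice d h"

lemma elem_order_eq_Least:
  assumes "\<exists>n>0. annihilates d h n v"
  shows "elem_order d h v = (LEAST n. n > 0 \<and> annihilates d h n v)"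
  unfolding elem_order_def using assms by (rule if_P)

lemma annihilates_elem_order: "annihilates d h (elem_order d h v) v"
proof (cases "\<exists>n>0. annihilates d h n v")
  case True
  have "annihilates d h (LEAST n. n > 0 \<and> annihilates d h n v) v"
    using LeastI_ex[OF True] by blast
  then show ?thesis
    by (simp only: elem_order_eq_Least[OF True])
next
  case False
  then have "elem_order d h v = 0"
    unfolding elem_order_def by (rule if_not_P)
  then show ?thesis
    by (simp add: zero_in_lap_lattice)
qed

lemma elem_order_dvd:
  assumes "annihilates d h N v"
  shows "elem_order d h v dvd N"
proof (cases "N = 0")
  case False
  define m where "m = elem_order d h v"
  have ex: "\<exists>n>0. annihilates d h n v"
    using assms False by blast
  then have m: "m = (LEAST n. n > 0 \<and> annihilates d h n v)"
    unfolding m_def by (rule elem_order_eq_Least)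
  then have "m > 0"
    using LeastI_ex[OF ex] by simp
  have "int (N mod m) = int N - int (N div m) * int m"
    using div_mult_mod_eq[of N m] by (metis add_diff_cancel_left' of_nat_add of_nat_mult)
  then have "annihilates d h (N mod m) v"
    using lap_lattice_diff[OF assms lap_lattice_scale[OF annihilates_elem_order[of d h v]],
        of "int (N div m)"]
    by (simp add: m_def left_diff_distrib mult.assoc)
  moreover have "N mod m < m"
    using \<open>m > 0\<close> by simp
  ultimately have "N mod m = 0"
    using m not_less_Least by blast
  then show ?thesis
    by (simp add: m_def mod_eq_0_iff_dvd)
qed simp

lemma annihilates_leaf_transfer:
  assumes "l \<in> tree_V d h" "l' \<in> tree_V d h" "length l = h" "length l' = h"
    and "annihilates d h N (std_basis l)"
  shows "annihilates d h N (std_basis l')"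
proof -
  let ?\<sigma> = "path_swap l l'"
  have "(\<lambda>j. int N * std_basis l j) \<circ> ?\<sigma> \<in> lap_lattice d h"
    using assms by (intro lap_lattice_comp_automorphism)
      (simp_all add: involuntory_imp_bij tree_adj_path_swap_iff path_swap_in_tree_V_iff)
  moreover have "?\<sigma> j = l \<longleftrightarrow> j = l'" for j
    using path_swap_self[of l l'] assms(3,4) by (metis path_swap_involutory)
  ultimately show ?thesis
    by (simp add: comp_def std_basis_def)
qed

lemma lap_row_eq:
  assumes "i \<in> tree_V d h"
  shows "lap_row d h i j =
    int d * std_basis i j - (\<Sum>y\<in>{y \<in> tree_V d h. tree_adj i y}. std_basis y j)"
  using assms by (auto simp: lap_row_def std_basis_def finite_tree_V)

lemma annihilates_basis_of_neighbour:
  assumes "i \<in> tree_V d h" "x \<in> tree_V d h" "tree_adj i x"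
    and "annihilates d h N (std_basis i)"
    and "\<And>y. y \<in> tree_V d h \<Longrightarrow> tree_adj i y \<Longrightarrow> y \<noteq> x \<Longrightarrow> annihilates d h N (std_basis y)"
  shows "annihilates d h N (std_basis x)"
proof -
  let ?C = "{y \<in> tree_V d h. tree_adj i y} - {x}"
  \<comment> \<open>the row of \<open>\<Delta>\<close> at \<open>i\<close>, solved for the coordinate at \<open>x\<close>\<close>
  have "int N * std_basis x j = int d * (int N * std_basis i j)
      - (int N * lap_row d h i j + (\<Sum>y\<in>?C. int N * std_basis y j))" for j
  proof -
    have "(\<Sum>y\<in>{y \<in> tree_V d h. tree_adj i y}. std_basis y j)
        = std_basis x j + (\<Sum>y\<in>?C. std_basis y j)"
      using assms(2,3) by (simp add: sum.remove finite_tree_V)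
    then have "std_basis x j
        = int d * std_basis i j - (lap_row d h i j + (\<Sum>y\<in>?C. std_basis y j))"
      using lap_row_eq[OF assms(1), of j] by linarith
    then have "int N * std_basis x j
        = int N * (int d * std_basis i j - (lap_row d h i j + (\<Sum>y\<in>?C. std_basis y j)))"
      by (rule arg_cong)
    then show ?thesis
      by (simp only: right_diff_distrib distrib_left sum_distrib_left mult.left_commute)
  qed
  moreover have "(\<lambda>j. int d * (int N * std_basis i j)
      - (int N * lap_row d h i j + (\<Sum>y\<in>?C. int N * std_basis y j))) \<in> lap_lattice d h"
    using assms(5)
    by (intro lap_lattice_diff lap_lattice_add lap_lattice_sum lap_lattice_scale[OF assms(4)]
        lap_lattice_scale[OF lap_row_in_lap_lattice[OF assms(1)]]) (auto simp: finite_tree_V)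
  ultimately show ?thesis
    by simp
qed

lemma annihilates_basis_from_leaves:
  assumes "d \<ge> 2"
    and leaves: "\<And>l. l \<in> tree_V d h \<Longrightarrow> length l = h \<Longrightarrow> annihilates d h N (std_basis l)"
    and "x \<in> tree_V d h"
  shows "annihilates d h N (std_basis x)"
  using \<open>x \<in> tree_V d h\<close>
proof (induction x rule: measure_induct_rule[of "\<lambda>x. h - length x"])
  case (less x)
  show ?case
  proof (cases "length x = h")
    case True
    then show ?thesis
      using leaves less.prems by blast
  next
    case False
    then have "length x < h"
      using less.prems by (simp add: tree_V_def)
    let ?i = "x @ [0]"
    have i: "?i \<in> tree_V d h"
      using snoc_zero_in_tree_V less.prems \<open>length x < h\<close> \<open>d \<ge> 2\<close> by blast
    have "annihilates d h N (std_basis y)"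
      if "y \<in> tree_V d h" "tree_adj ?i y" "y \<noteq> x" for y
    proof -
      have "length y = Suc (Suc (length x))" "length y \<le> h"
        using that by (auto simp: tree_adj_def tree_V_def)
      then show ?thesis
        using less.IH \<open>y \<in> tree_V d h\<close> by simp
    qed
    moreover have "annihilates d h N (std_basis ?i)"
      using less.IH i \<open>length x < h\<close> by simp
    ultimately show ?thesis
      using annihilates_basis_of_neighbour[OF i less.prems] by (simp add: tree_adj_def)
  qed
qed

lemma annihilates_of_basis:
  assumes "\<And>i. i \<in> tree_V d h \<Longrightarrow> annihilates d h N (std_basis i)" and "v \<in> ZV d h"
  shows "annihilates d h N v"
proof -
  have "(\<Sum>i\<in>tree_V d h. v i * (int N * std_basis i j)) = int N * v j" for j
  proof -
    have "(\<Sum>i\<in>tree_V d h. v i * (int N * std_basis i j))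
        = (\<Sum>i\<in>tree_V d h. if i = j then int N * v j else 0)"
      by (rule sum.cong) (auto simp: std_basis_def)
    then show ?thesis
      using \<open>v \<in> ZV d h\<close> by (simp add: finite_tree_V ZV_def)
  qed
  then have "(\<lambda>j. int N * v j) = (\<lambda>j. \<Sum>i\<in>tree_V d h. v i * (int N * std_basis i j))"
    by simp
  also have "\<dots> \<in> lap_lattice d h"
    using assms(1) by (intro lap_lattice_sum) (simp_all add: finite_tree_V lap_lattice_scale)
  finally show ?thesis .
qed

lemma group_exponent_dvd:
  assumes "\<And>i. i \<in> tree_V d h \<Longrightarrow> annihilates d h N (std_basis i)"
  shows "group_exponent d h dvd N"
  unfolding group_exponent_def
proof (rule Lcm_least)
  fix m
  assume "m \<in> elem_order d h ` ZV d h"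
  then obtain v where "v \<in> ZV d h" "m = elem_order d h v"
    by blast
  then show "m dvd N"
    using elem_order_dvd annihilates_of_basis assms by blast
qed

lemma elem_order_dvd_group_exponent: "v \<in> ZV d h \<Longrightarrow> elem_order d h v dvd group_exponent d h"
  unfolding group_exponent_def by (rule dvd_Lcm) (rule imageI)

theorem lemma7p4:
  fixes d h :: nat and l :: "nat list"
  assumes "d \<ge> 3" and "h \<ge> 1"
    and "l \<in> tree_V d h" and "length l = h"
  shows "group_exponent d h = elem_order d h (std_basis l)"
proof (rule dvd_antisym)
  let ?N = "elem_order d h (std_basis l)"
  have "annihilates d h ?N (std_basis l')" if "l' \<in> tree_V d h" "length l' = h" for l'
    using annihilates_leaf_transfer[OF assms(3) that(1) assms(4) that(2) annihilates_elem_order] .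
  then have "annihilates d h ?N (std_basis x)" if "x \<in> tree_V d h" for x
    using annihilates_basis_from_leaves \<open>d \<ge> 3\<close> that by simp
  then show "group_exponent d h dvd ?N"
    by (rule group_exponent_dvd)
  show "?N dvd group_exponent d h"
    using \<open>l \<in> tree_V d h\<close> by (intro elem_order_dvd_group_exponent) (simp add: ZV_def std_basis_def)
qed

end
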